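(* If a protocol $\Pi$ with $m$ memory states is not parsimonious, then there exists a parsimonious protocol $\Pi'$ with at most $m$ memory states such that $U^R(\Pi)\le U^R(\Pi')$.
   Context: Setting. The state of nature is $\theta\in\Theta=\{H,L\}$ with prior $\Pr(\theta=H)=p\in(0,1)$. A sender privately observes $\theta$; a receiver does not. $S$ is a finite signal set; conditional on $\theta$, signals are i.i.d. with distribution $\pi_\theta$ on $S$, where $\pi_\theta(s)>0$ for all $s\in S,\theta\in\Theta$, and $\pi_H\neq\pi_L$. The receiver has a finite set of memory states $M$ and chooses a protocol $\Pi=(f,g,a)$: a transition function $f:M\times S\to\Delta(M)$ ($f(i,s)(j)$ is the probability of moving from memory state $i$ to $j$ after signal $s$), an initial distribution $g\in\Delta(M)$ of $m_0$, and an action rule $a:M\to[0,1]$ (probability of action $H$ if the game ends in that memory state). A sender strategy is $\sigma:M\times\Theta\to[0,1]$, the probability of stopping in the current memory state given $\theta$. Timing: $m_0\sim g$; in each period $t=0,1,\dots$, with current memory state $m_t$, the game ends if $m_t$ is absorbing ($f(m_t,s)(m_t)=1$ for all $s$); otherwise the sender stops with probability $\sigma(m_t,\theta)$, ending the game; if not stopped, a signal $s_t\sim\pi_\theta$ is generated and $m_{t+1}\sim f(m_t,s_t)$. When the game ends in state $m_t$ the receiver takes action $H$ with probability $a(m_t)$ and $L$ otherwise. The receiver's payoff is $1$ if the action equals $\theta$ and $0$ otherwise; the sender's payoff is $1$ if the action is $H$ and $0$ otherwise; there is no discounting; if the game never ends both get $0$. $U^S(\Pi,\sigma),U^R(\Pi,\sigma)$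 denote expected payoffs, $\mathrm{br}(\Pi)=\arg\sup_\sigma U^S(\Pi,\sigma)$ is the set of sender best responses, and $U^R(\Pi):=U^R(\Pi,\sigma)$ for $\sigma\in\mathrm{br}(\Pi)$. Since $\pi_\theta$ has full support, which transitions $i\to j$ have positive probability does not depend on $\theta$; the terms absorbing, transient, recurrent communicating class applied to $\Pi$ refer to the Markov chain on $M$ induced by $f$ with signals drawn from $\pi_\theta$ (sender never stopping), and mean the same for both $\theta$. A protocol is parsimonious if (i) it has exactly two absorbing memory states, one in which $a=0$ ($L$ played with probability 1) and one in which $a=1$ ($H$ played with probability 1), and (ii) all other memory states are transient with $a=0$. *)

theory Defs
  imports Complex_Main
begin

datatype theta = H | L

text \<open>Memory states are natural numbers; a protocol with m memory states uses
  the memory set M = {..<m}.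
  A transition function is f :: nat => 's => nat => real with f i s j the
  probability of moving from i to j after signal s; g is the initial
  distribution and a the action rule.  A sender strategy is
  sigma :: nat => theta => real (probability of stopping).\<close>

definition is_dist :: "nat set \<Rightarrow> (nat \<Rightarrow> real) \<Rightarrow> bool" where
  "is_dist M d \<longleftrightarrow> (\<forall>j\<in>M. 0 \<le> d j) \<and> (\<Sum>j\<in>M. d j) = 1"

definition is_protocol ::
  "nat set \<Rightarrow> (nat \<Rightarrow> 's \<Rightarrow> nat \<Rightarrow> real) \<Rightarrow> (nat \<Rightarrow> real) \<Rightarrow> (nat \<Rightarrow> real) \<Rightarrow> bool" where
  "is_protocol M f g a \<longleftrightarrow>
     finite M \<and> (\<forall>i\<in>M. \<forall>s. is_dist M (f i s)) \<and> is_dist M g \<and> (\<forall>i\<in>M. 0 \<le> a i \<and> a i \<le> 1)"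

definition valid_signals :: "(theta \<Rightarrow> 's::finite \<Rightarrow> real) \<Rightarrow> bool" where
  "valid_signals \<pi> \<longleftrightarrow> (\<forall>\<theta> s. 0 < \<pi> \<theta> s) \<and> (\<forall>\<theta>. (\<Sum>s\<in>UNIV. \<pi> \<theta> s) = 1) \<and> \<pi> H \<noteq> \<pi> L"

definition valid_strategy :: "nat set \<Rightarrow> (nat \<Rightarrow> theta \<Rightarrow> real) \<Rightarrow> bool" where
  "valid_strategy M \<sigma> \<longleftrightarrow> (\<forall>i\<in>M. \<forall>\<theta>. 0 \<le> \<sigma> i \<theta> \<and> \<sigma> i \<theta> \<le> 1)"

definition absorbing :: "(nat \<Rightarrow> 's \<Rightarrow> nat \<Rightarrow> real) \<Rightarrow> nat \<Rightarrow> bool" where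
  "absorbing f i \<longleftrightarrow> (\<forall>s. f i s i = 1)"

definition Ptrans :: "(theta \<Rightarrow> 's::finite \<Rightarrow> real) \<Rightarrow> (nat \<Rightarrow> 's \<Rightarrow> nat \<Rightarrow> real) \<Rightarrow> theta \<Rightarrow> nat \<Rightarrow> nat \<Rightarrow> real" where
  "Ptrans \<pi> f \<theta> i j = (\<Sum>s\<in>UNIV. \<pi> \<theta> s * f i s j)"

text \<open>taboo i n j: probability, starting from i, of being in j at step n+1
  without having visited i at steps 1..n.\<close>
fun taboo :: "nat set \<Rightarrow> (theta \<Rightarrow> 's::finite \<Rightarrow> real) \<Rightarrow> (nat \<Rightarrow> 's \<Rightarrow> nat \<Rightarrow> real) \<Rightarrow> theta
              \<Rightarrow> nat \<Rightarrow> nat \<Rightarrow> nat \<Rightarrow> real" where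
  "taboo M \<pi> f \<theta> i 0 j = Ptrans \<pi> f \<theta> i j"
| "taboo M \<pi> f \<theta> i (Suc n) j = (\<Sum>k\<in>M - {i}. taboo M \<pi> f \<theta> i n k * Ptrans \<pi> f \<theta> k j)"

definition return_prob :: "nat set \<Rightarrow> (theta \<Rightarrow> 's::finite \<Rightarrow> real) \<Rightarrow> (nat \<Rightarrow> 's \<Rightarrow> nat \<Rightarrow> real) \<Rightarrow> theta \<Rightarrow> nat \<Rightarrow> real" where
  "return_prob M \<pi> f \<theta> i = (\<Sum>n. taboo M \<pi> f \<theta> i n i)"

definition transient :: "nat set \<Rightarrow> (theta \<Rightarrow> 's::finite \<Rightarrow> real) \<Rightarrow> (nat \<Rightarrow> 's \<Rightarrow> nat \<Rightarrow> real) \<Rightarrow> theta \<Rightarrow> nat \<Rightarrow> bool" where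
  "transient M \<pi> f \<theta> i \<longleftrightarrow> return_prob M \<pi> f \<theta> i < 1"

definition parsimonious :: "nat set \<Rightarrow> (theta \<Rightarrow> 's::finite \<Rightarrow> real) \<Rightarrow> (nat \<Rightarrow> 's \<Rightarrow> nat \<Rightarrow> real) \<Rightarrow> (nat \<Rightarrow> real) \<Rightarrow> bool" where
  "parsimonious M \<pi> f a \<longleftrightarrow>
     (\<exists>l\<in>M. \<exists>h\<in>M. {i\<in>M. absorbing f i} = {l, h} \<and> l \<noteq> h \<and> a l = 0 \<and> a h = 1 \<and>
        (\<forall>i\<in>M - {l, h}. (\<forall>\<theta>. transient M \<pi> f \<theta> i) \<and> a i = 0))"

definition stopP :: "(nat \<Rightarrow> 's \<Rightarrow> nat \<Rightarrow> real) \<Rightarrow> (nat \<Rightarrow> theta \<Rightarrow> real) \<Rightarrow> theta \<Rightarrow> nat \<Rightarrow> real" where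
  "stopP f \<sigma> \<theta> i = (if absorbing f i then 1 else \<sigma> i \<theta>)"

text \<open>alive t j: probability that the game has not ended before period t and m_t = j.\<close>
fun alive :: "nat set \<Rightarrow> (theta \<Rightarrow> 's::finite \<Rightarrow> real) \<Rightarrow> (nat \<Rightarrow> 's \<Rightarrow> nat \<Rightarrow> real) \<Rightarrow> (nat \<Rightarrow> real)
              \<Rightarrow> (nat \<Rightarrow> theta \<Rightarrow> real) \<Rightarrow> theta \<Rightarrow> nat \<Rightarrow> nat \<Rightarrow> real" where
  "alive M \<pi> f g \<sigma> \<theta> 0 j = g j"
| "alive M \<pi> f g \<sigma> \<theta> (Suc t) j =
     (\<Sum>i\<in>M. alive M \<pi> f g \<sigma> \<theta> t i * (1 - stopP f \<sigma> \<theta> i) * Ptrans \<pi> f \<theta> i j)"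

definition endprob :: "nat set \<Rightarrow> (theta \<Rightarrow> 's::finite \<Rightarrow> real) \<Rightarrow> (nat \<Rightarrow> 's \<Rightarrow> nat \<Rightarrow> real) \<Rightarrow> (nat \<Rightarrow> real)
              \<Rightarrow> (nat \<Rightarrow> theta \<Rightarrow> real) \<Rightarrow> theta \<Rightarrow> nat \<Rightarrow> real" where
  "endprob M \<pi> f g \<sigma> \<theta> i = (\<Sum>t. alive M \<pi> f g \<sigma> \<theta> t i * stopP f \<sigma> \<theta> i)"

definition US :: "real \<Rightarrow> nat set \<Rightarrow> (theta \<Rightarrow> 's::finite \<Rightarrow> real) \<Rightarrow> (nat \<Rightarrow> 's \<Rightarrow> nat \<Rightarrow> real)
              \<Rightarrow> (nat \<Rightarrow> real) \<Rightarrow> (nat \<Rightarrow> real) \<Rightarrow> (nat \<Rightarrow> theta \<Rightarrow> real) \<Rightarrow> real" where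
  "US p M \<pi> f g a \<sigma> =
     p * (\<Sum>i\<in>M. endprob M \<pi> f g \<sigma> H i * a i) + (1 - p) * (\<Sum>i\<in>M. endprob M \<pi> f g \<sigma> L i * a i)"

definition UR :: "real \<Rightarrow> nat set \<Rightarrow> (theta \<Rightarrow> 's::finite \<Rightarrow> real) \<Rightarrow> (nat \<Rightarrow> 's \<Rightarrow> nat \<Rightarrow> real)
              \<Rightarrow> (nat \<Rightarrow> real) \<Rightarrow> (nat \<Rightarrow> real) \<Rightarrow> (nat \<Rightarrow> theta \<Rightarrow> real) \<Rightarrow> real" where
  "UR p M \<pi> f g a \<sigma> =
     p * (\<Sum>i\<in>M. endprob M \<pi> f g \<sigma> H i * a i) + (1 - p) * (\<Sum>i\<in>M. endprob M \<pi> f g \<sigma> L i * (1 - a i))"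

definition br :: "real \<Rightarrow> nat set \<Rightarrow> (theta \<Rightarrow> 's::finite \<Rightarrow> real) \<Rightarrow> (nat \<Rightarrow> 's \<Rightarrow> nat \<Rightarrow> real)
              \<Rightarrow> (nat \<Rightarrow> real) \<Rightarrow> (nat \<Rightarrow> real) \<Rightarrow> (nat \<Rightarrow> theta \<Rightarrow> real) set" where
  "br p M \<pi> f g a =
     {\<sigma>. valid_strategy M \<sigma> \<and> (\<forall>\<sigma>'. valid_strategy M \<sigma>' \<longrightarrow> US p M \<pi> f g a \<sigma>' \<le> US p M \<pi> f g a \<sigma>)}"

end

theory Submission
  imports Defs "HOL-Library.Indicator_Function"
begin

text \<open>
  Fix a sender best response sigma and write P_theta(tau) for the probability of action H when
  the type theta plays tau.  Call a memory state a local maximum of the action rule a if no state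
  reachable from it has a larger value of a.  Making the sender stop at a local maximum i0 can
  only increase P_theta: the mass stopped there would otherwise end in states reachable from i0,
  where a is no larger.

  If there are two local maxima k1 and k2, let rho stop at every local maximum and elsewhere
  play like the H type of sigma.  Replace every ending of the game under rho by a lottery that
  leads with probability a to an absorbing state k1 with action H and otherwise to an absorbing
  state k2 with action L.  In the resulting parsimonious protocol never stopping reproduces
  P_theta(rho) and is a best response, and every best response gives the same P_H and a weakly
  smaller P_L.  So the receiver gets at least
  p P_H(rho) + (1 - p)(1 - P_L(rho)) >= p P_H(sigma) + (1 - p)(1 - P_L(sigma)) >= U^R(sigma),
  where P_H(rho) >= P_H(sigma) by the stopping argument and P_L(rho) <= P_L(sigma) because the L
  type of sigma cannot gain by switching to rho.

  If the local maximum i is unique, it maximises a and is reached from every state, so that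
  P_H(sigma) <= a i <= P_L(sigma) and U^R(sigma) <= p a i + (1 - p)(1 - a i); a protocol with two
  absorbing states and initial lottery (a i, 1 - a i) attains this value.
\<close>

definition trans_graph :: "nat set \<Rightarrow> (nat \<Rightarrow> 's \<Rightarrow> nat \<Rightarrow> real) \<Rightarrow> (nat \<times> nat) set" where
  "trans_graph M f = {(i, j). i \<in> M \<and> j \<in> M \<and> (\<exists>s. 0 < f i s j)}"

lemma rtrancl_trans_graph_in: "(i, j) \<in> (trans_graph M f)\<^sup>* \<Longrightarrow> i \<in> M \<Longrightarrow> j \<in> M"
  by (induction rule: rtrancl_induct) (auto simp: trans_graph_def)

lemma stopP_bounds:
  assumes "valid_strategy M \<sigma>" "i \<in> M"
  shows "0 \<le> stopP f \<sigma> \<theta> i" "stopP f \<sigma> \<theta> i \<le> 1"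
  using assms unfolding valid_strategy_def stopP_def by auto

lemma stopP_absorbing [simp]: "absorbing f i \<Longrightarrow> stopP f \<sigma> \<theta> i = 1"
  by (simp add: stopP_def)

definition prob_H :: "nat set \<Rightarrow> (theta \<Rightarrow> 's::finite \<Rightarrow> real) \<Rightarrow> (nat \<Rightarrow> 's \<Rightarrow> nat \<Rightarrow> real)
    \<Rightarrow> (nat \<Rightarrow> real) \<Rightarrow> (nat \<Rightarrow> theta \<Rightarrow> real) \<Rightarrow> theta \<Rightarrow> (nat \<Rightarrow> real) \<Rightarrow> real" where
  "prob_H M \<pi> f g \<sigma> \<theta> a = (\<Sum>i\<in>M. endprob M \<pi> f g \<sigma> \<theta> i * a i)"

lemma alive_cong:
  assumes "\<forall>i\<in>M. \<sigma> i \<theta> = \<sigma>' i \<theta>"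
  shows "alive M \<pi> f g \<sigma> \<theta> t j = alive M \<pi> f g \<sigma>' \<theta> t j"
proof (induction t arbitrary: j)
  case (Suc t)
  show ?case by (simp, rule sum.cong) (use Suc assms in \<open>auto simp: stopP_def\<close>)
qed simp

lemma prob_H_cong:
  assumes "\<forall>i\<in>M. \<sigma> i \<theta> = \<sigma>' i \<theta>"
  shows "prob_H M \<pi> f g \<sigma> \<theta> b = prob_H M \<pi> f g \<sigma>' \<theta> b"
proof -
  have "alive M \<pi> f g \<sigma> \<theta> t i = alive M \<pi> f g \<sigma>' \<theta> t i" for t i
    using assms by (rule alive_cong)
  then show ?thesis
    unfolding prob_H_def endprob_def using assms by (intro sum.cong) (auto simp: stopP_def)
qed

lemma US_eq_prob_H: "US p M \<pi> f g a \<sigma> = p * prob_H M \<pi> f g \<sigma> H a + (1 - p) * prob_H M \<pi> f g \<sigma> L a"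
  by (simp add: US_def prob_H_def)

lemma best_response_prob_H_L_le:
  assumes br: "\<sigma> \<in> br p M \<pi> f g a" and \<rho>: "valid_strategy M \<rho>" and p: "p < 1"
  shows "prob_H M \<pi> f g \<rho> L a \<le> prob_H M \<pi> f g \<sigma> L a"
proof -
  define \<sigma>' where "\<sigma>' i \<theta> = (if \<theta> = H then \<sigma> i H else \<rho> i \<theta>)" for i \<theta>
  have "valid_strategy M \<sigma>'"
    using br \<rho> by (auto simp: \<sigma>'_def br_def valid_strategy_def)
  then have "US p M \<pi> f g a \<sigma>' \<le> US p M \<pi> f g a \<sigma>" using br by (simp add: br_def)
  moreover have "prob_H M \<pi> f g \<sigma>' H a = prob_H M \<pi> f g \<sigma> H a"
    by (rule prob_H_cong) (simp add: \<sigma>'_def)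
  moreover have "prob_H M \<pi> f g \<sigma>' L a = prob_H M \<pi> f g \<rho> L a"
    by (rule prob_H_cong) (simp add: \<sigma>'_def)
  ultimately show ?thesis using p by (simp add: US_eq_prob_H)
qed

locale protocol_game =
  fixes M :: "nat set" and \<pi> :: "theta \<Rightarrow> 's::finite \<Rightarrow> real"
    and f :: "nat \<Rightarrow> 's \<Rightarrow> nat \<Rightarrow> real" and g a :: "nat \<Rightarrow> real"
  assumes protocol: "is_protocol M f g a" and signals: "valid_signals \<pi>"
begin

lemma finite_M: "finite M"
  using protocol by (simp add: is_protocol_def)

lemma f_nonneg: "i \<in> M \<Longrightarrow> j \<in> M \<Longrightarrow> 0 \<le> f i s j"
  using protocol by (simp add: is_protocol_def is_dist_def)

lemma f_sum: "i \<in> M \<Longrightarrow> (\<Sum>j\<in>M. f i s j) = 1"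
  using protocol by (simp add: is_protocol_def is_dist_def)

lemma g_nonneg: "j \<in> M \<Longrightarrow> 0 \<le> g j"
  using protocol by (simp add: is_protocol_def is_dist_def)

lemma g_sum: "(\<Sum>j\<in>M. g j) = 1"
  using protocol by (simp add: is_protocol_def is_dist_def)

lemma M_nonempty: "M \<noteq> {}"
  using g_sum by auto

lemma a_bounds: "i \<in> M \<Longrightarrow> 0 \<le> a i \<and> a i \<le> 1"
  using protocol by (simp add: is_protocol_def)

lemma signal_pos: "0 < \<pi> \<theta> s"
  using signals by (simp add: valid_signals_def)

lemma signal_sum: "(\<Sum>s\<in>UNIV. \<pi> \<theta> s) = 1"
  using signals by (simp add: valid_signals_def)

lemma Ptrans_nonneg: "i \<in> M \<Longrightarrow> j \<in> M \<Longrightarrow> 0 \<le> Ptrans \<pi> f \<theta> i j"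
  unfolding Ptrans_def by (intro sum_nonneg mult_nonneg_nonneg) (auto intro: less_imp_le signal_pos f_nonneg)

lemma Ptrans_sum: "i \<in> M \<Longrightarrow> (\<Sum>j\<in>M. Ptrans \<pi> f \<theta> i j) = 1"
proof -
  assume i: "i \<in> M"
  have "(\<Sum>j\<in>M. Ptrans \<pi> f \<theta> i j) = (\<Sum>s\<in>UNIV. \<pi> \<theta> s * (\<Sum>j\<in>M. f i s j))"
    unfolding Ptrans_def sum_distrib_left by (rule sum.swap)
  then show ?thesis using i by (simp add: f_sum signal_sum)
qed

lemma Ptrans_pos_iff:
  assumes "i \<in> M" "j \<in> M"
  shows "0 < Ptrans \<pi> f \<theta> i j \<longleftrightarrow> (i, j) \<in> trans_graph M f"
proof -
  have nonneg: "0 \<le> \<pi> \<theta> s * f i s j" for s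
    using assms signal_pos f_nonneg by (simp add: less_imp_le)
  have "Ptrans \<pi> f \<theta> i j = 0 \<longleftrightarrow> (\<forall>s. \<pi> \<theta> s * f i s j = 0)"
    unfolding Ptrans_def using nonneg by (simp add: sum_nonneg_eq_0_iff)
  moreover have "0 \<le> Ptrans \<pi> f \<theta> i j"
    unfolding Ptrans_def using nonneg by (simp add: sum_nonneg)
  ultimately have "0 < Ptrans \<pi> f \<theta> i j \<longleftrightarrow> (\<exists>s. \<pi> \<theta> s * f i s j \<noteq> 0)"
    by auto
  also have "\<dots> \<longleftrightarrow> (\<exists>s. 0 < f i s j)"
    using assms signal_pos f_nonneg by (auto simp: order_less_le)
  finally show ?thesis using assms by (simp add: trans_graph_def)
qed

lemma alive_nonneg: "valid_strategy M \<sigma> \<Longrightarrow> j \<in> M \<Longrightarrow> 0 \<le> alive M \<pi> f g \<sigma> \<theta> t j"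
proof (induction t arbitrary: j)
  case 0
  then show ?case by (simp add: g_nonneg)
next
  case (Suc t)
  then show ?case
    by (simp, intro sum_nonneg mult_nonneg_nonneg) (auto simp: stopP_bounds Ptrans_nonneg)
qed

lemma alive_mass_Suc:
  "(\<Sum>j\<in>M. alive M \<pi> f g \<sigma> \<theta> (Suc t) j) = (\<Sum>i\<in>M. alive M \<pi> f g \<sigma> \<theta> t i * (1 - stopP f \<sigma> \<theta> i))"
proof -
  have "(\<Sum>j\<in>M. alive M \<pi> f g \<sigma> \<theta> (Suc t) j) =
        (\<Sum>i\<in>M. alive M \<pi> f g \<sigma> \<theta> t i * (1 - stopP f \<sigma> \<theta> i) * (\<Sum>j\<in>M. Ptrans \<pi> f \<theta> i j))"
    unfolding alive.simps sum_distrib_left by (rule sum.swap)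
  then show ?thesis by (simp add: Ptrans_sum)
qed

lemma ended_mass_telescope:
  "(\<Sum>t<T. \<Sum>i\<in>M. alive M \<pi> f g \<sigma> \<theta> t i * stopP f \<sigma> \<theta> i) = 1 - (\<Sum>i\<in>M. alive M \<pi> f g \<sigma> \<theta> T i)"
proof (induction T)
  case 0
  then show ?case by (simp add: g_sum)
next
  case (Suc T)
  have "(\<Sum>i\<in>M. alive M \<pi> f g \<sigma> \<theta> T i * stopP f \<sigma> \<theta> i) =
      (\<Sum>i\<in>M. alive M \<pi> f g \<sigma> \<theta> T i) - (\<Sum>i\<in>M. alive M \<pi> f g \<sigma> \<theta> T i * (1 - stopP f \<sigma> \<theta> i))"
    by (simp add: algebra_simps sum_subtractf)
  then show ?case using Suc alive_mass_Suc[of \<sigma> \<theta> T] by simp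
qed

context
  fixes \<sigma> :: "nat \<Rightarrow> theta \<Rightarrow> real" and \<theta> :: theta
  assumes strategy: "valid_strategy M \<sigma>"
begin

lemma end_term_nonneg: "i \<in> M \<Longrightarrow> 0 \<le> alive M \<pi> f g \<sigma> \<theta> t i * stopP f \<sigma> \<theta> i"
  using strategy by (simp add: alive_nonneg stopP_bounds)

lemma alive_mass_nonneg: "0 \<le> (\<Sum>i\<in>M. alive M \<pi> f g \<sigma> \<theta> t i)"
  using strategy by (simp add: alive_nonneg sum_nonneg)

lemma summable_end_terms: "i \<in> M \<Longrightarrow> summable (\<lambda>t. alive M \<pi> f g \<sigma> \<theta> t i * stopP f \<sigma> \<theta> i)"
proof (rule summableI_nonneg_bounded)
  fix T assume i: "i \<in> M"
  have "(\<Sum>t<T. alive M \<pi> f g \<sigma> \<theta> t i * stopP f \<sigma> \<theta> i) \<le>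
        (\<Sum>t<T. \<Sum>i\<in>M. alive M \<pi> f g \<sigma> \<theta> t i * stopP f \<sigma> \<theta> i)"
    using i by (intro sum_mono member_le_sum) (auto simp: finite_M end_term_nonneg)
  then show "(\<Sum>t<T. alive M \<pi> f g \<sigma> \<theta> t i * stopP f \<sigma> \<theta> i) \<le> 1"
    using alive_mass_nonneg[of T] by (simp add: ended_mass_telescope)
qed (rule end_term_nonneg)

lemma endprob_nonneg: "i \<in> M \<Longrightarrow> 0 \<le> endprob M \<pi> f g \<sigma> \<theta> i"
  unfolding endprob_def by (intro suminf_nonneg summable_end_terms end_term_nonneg)

lemma sums_prob_H:
  "(\<lambda>t. \<Sum>i\<in>M. alive M \<pi> f g \<sigma> \<theta> t i * stopP f \<sigma> \<theta> i * b i) sums prob_H M \<pi> f g \<sigma> \<theta> b"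
  unfolding prob_H_def endprob_def
  by (intro sums_sum sums_mult2 summable_sums summable_end_terms)

lemma endprob_total_LIMSEQ:
  "(\<lambda>T. 1 - (\<Sum>i\<in>M. alive M \<pi> f g \<sigma> \<theta> T i)) \<longlonglongrightarrow> (\<Sum>i\<in>M. endprob M \<pi> f g \<sigma> \<theta> i)"
  using sums_prob_H[of "\<lambda>_. 1"] by (simp add: sums_def prob_H_def ended_mass_telescope)

lemma endprob_total_le_1: "(\<Sum>i\<in>M. endprob M \<pi> f g \<sigma> \<theta> i) \<le> 1"
  by (rule LIMSEQ_le_const2[OF endprob_total_LIMSEQ]) (simp add: alive_mass_nonneg)

lemma endprob_total_eq_1:
  assumes "(\<lambda>T. \<Sum>i\<in>M. alive M \<pi> f g \<sigma> \<theta> T i) \<longlonglongrightarrow> 0"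
  shows "(\<Sum>i\<in>M. endprob M \<pi> f g \<sigma> \<theta> i) = 1"
  using LIMSEQ_unique[OF endprob_total_LIMSEQ tendsto_diff[OF tendsto_const assms]] by simp

end

lemma prob_H_le_bound:
  assumes "valid_strategy M \<sigma>" "\<forall>i\<in>M. b i \<le> c" "0 \<le> c"
  shows "prob_H M \<pi> f g \<sigma> \<theta> b \<le> c"
proof -
  have "prob_H M \<pi> f g \<sigma> \<theta> b \<le> (\<Sum>i\<in>M. endprob M \<pi> f g \<sigma> \<theta> i * c)"
    unfolding prob_H_def using assms by (intro sum_mono mult_left_mono) (auto simp: endprob_nonneg)
  also have "\<dots> \<le> c"
    using endprob_total_le_1[OF assms(1), of \<theta>] mult_right_mono[of _ 1 c] assms(3)
    by (simp add: sum_distrib_right[symmetric])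
  finally show ?thesis .
qed

lemma UR_le_prob_H_bounds:
  assumes "valid_strategy M \<sigma>" "0 \<le> p" "p \<le> 1"
    and "prob_H M \<pi> f g \<sigma> H a \<le> x" "y \<le> prob_H M \<pi> f g \<sigma> L a"
  shows "UR p M \<pi> f g a \<sigma> \<le> p * x + (1 - p) * (1 - y)"
proof -
  have "UR p M \<pi> f g a \<sigma> =
      p * prob_H M \<pi> f g \<sigma> H a + (1 - p) * ((\<Sum>i\<in>M. endprob M \<pi> f g \<sigma> L i) - prob_H M \<pi> f g \<sigma> L a)"
    by (simp add: UR_def prob_H_def algebra_simps sum_subtractf)
  also have "\<dots> \<le> p * x + (1 - p) * (1 - y)"
    using endprob_total_le_1[OF assms(1), of L] assms by (intro add_mono mult_left_mono) auto
  finally show ?thesis .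
qed

lemma endprob_all_absorbing:
  assumes "\<forall>i\<in>M. absorbing f i" "i \<in> M"
  shows "endprob M \<pi> f g \<sigma> \<theta> i = g i"
proof -
  have "alive M \<pi> f g \<sigma> \<theta> t i * stopP f \<sigma> \<theta> i = (if t = 0 then g i else 0)" for t
    using assms by (cases t) (simp_all add: sum.neutral)
  then show ?thesis
    unfolding endprob_def using sums_single[of 0 "\<lambda>_. g i"] by (simp add: sums_iff)
qed

end

section \<open>Absorption\<close>

fun survival :: "nat set \<Rightarrow> (theta \<Rightarrow> 's::finite \<Rightarrow> real) \<Rightarrow> (nat \<Rightarrow> 's \<Rightarrow> nat \<Rightarrow> real)
    \<Rightarrow> (nat \<Rightarrow> theta \<Rightarrow> real) \<Rightarrow> theta \<Rightarrow> nat \<Rightarrow> nat \<Rightarrow> real" where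
  "survival M \<pi> f \<sigma> \<theta> 0 i = 1"
| "survival M \<pi> f \<sigma> \<theta> (Suc n) i =
     (1 - stopP f \<sigma> \<theta> i) * (\<Sum>k\<in>M. Ptrans \<pi> f \<theta> i k * survival M \<pi> f \<sigma> \<theta> n k)"

context protocol_game
begin

context
  fixes \<sigma> :: "nat \<Rightarrow> theta \<Rightarrow> real" and \<theta> :: theta
  assumes strategy: "valid_strategy M \<sigma>"
begin

lemma alive_mass_shift:
  "(\<Sum>i\<in>M. alive M \<pi> f g \<sigma> \<theta> (t + n) i) = (\<Sum>i\<in>M. alive M \<pi> f g \<sigma> \<theta> t i * survival M \<pi> f \<sigma> \<theta> n i)"
proof (induction n arbitrary: t)
  case (Suc n)
  have "(\<Sum>i\<in>M. alive M \<pi> f g \<sigma> \<theta> (t + Suc n) i) = (\<Sum>i\<in>M. alive M \<pi> f g \<sigma> \<theta> (Suc t) i * survival M \<pi> f \<sigma> \<theta> n i)"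
    using Suc.IH[of "Suc t"] by simp
  also have "\<dots> = (\<Sum>i\<in>M. \<Sum>k\<in>M. alive M \<pi> f g \<sigma> \<theta> t k * (1 - stopP f \<sigma> \<theta> k) * Ptrans \<pi> f \<theta> k i * survival M \<pi> f \<sigma> \<theta> n i)"
    by (simp add: sum_distrib_right)
  also have "\<dots> = (\<Sum>k\<in>M. \<Sum>i\<in>M. alive M \<pi> f g \<sigma> \<theta> t k * (1 - stopP f \<sigma> \<theta> k) * Ptrans \<pi> f \<theta> k i * survival M \<pi> f \<sigma> \<theta> n i)"
    by (rule sum.swap)
  also have "\<dots> = (\<Sum>k\<in>M. alive M \<pi> f g \<sigma> \<theta> t k * survival M \<pi> f \<sigma> \<theta> (Suc n) k)"
    by (simp add: sum_distrib_left mult.assoc)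
  finally show ?case .
qed simp

lemma survival_bounds: "i \<in> M \<Longrightarrow> 0 \<le> survival M \<pi> f \<sigma> \<theta> n i \<and> survival M \<pi> f \<sigma> \<theta> n i \<le> 1"
proof (induction n arbitrary: i)
  case (Suc n)
  have "0 \<le> (\<Sum>k\<in>M. Ptrans \<pi> f \<theta> i k * survival M \<pi> f \<sigma> \<theta> n k)"
    using Suc by (intro sum_nonneg mult_nonneg_nonneg) (auto simp: Ptrans_nonneg)
  moreover have "(\<Sum>k\<in>M. Ptrans \<pi> f \<theta> i k * survival M \<pi> f \<sigma> \<theta> n k) \<le> (\<Sum>k\<in>M. Ptrans \<pi> f \<theta> i k)"
    using Suc by (intro sum_mono mult_left_le) (auto simp: Ptrans_nonneg)
  ultimately show ?case
    using stopP_bounds[OF strategy Suc.prems, where f=f and \<theta>=\<theta>] Ptrans_sum[OF Suc.prems]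
    by (auto intro: mult_le_one mult_nonneg_nonneg)
qed simp

lemma decseq_survival: "i \<in> M \<Longrightarrow> decseq (\<lambda>n. survival M \<pi> f \<sigma> \<theta> n i)"
proof -
  have "survival M \<pi> f \<sigma> \<theta> (Suc n) i \<le> survival M \<pi> f \<sigma> \<theta> n i" if "i \<in> M" for n i
    using that
  proof (induction n arbitrary: i)
    case 0
    then show ?case using survival_bounds[of i 1] by simp
  next
    case (Suc n)
    then show ?case
      using stopP_bounds[OF strategy Suc.prems]
      by (subst (1 2) survival.simps, intro mult_left_mono sum_mono) (auto simp: Ptrans_nonneg)
  qed
  then show "i \<in> M \<Longrightarrow> ?thesis" by (simp add: decseq_SucI)
qed

lemma survival_lt_1:
  assumes "(i, j) \<in> (trans_graph M f)\<^sup>*" "0 < stopP f \<sigma> \<theta> j" "i \<in> M"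
  shows "\<exists>n. survival M \<pi> f \<sigma> \<theta> n i < 1"
  using assms
proof (induction rule: converse_rtrancl_induct)
  case base
  then have "survival M \<pi> f \<sigma> \<theta> 1 j < 1" by (simp add: Ptrans_sum)
  then show ?case ..
next
  case (step i i')
  have i': "i' \<in> M" and edge: "0 < Ptrans \<pi> f \<theta> i i'"
    using step.hyps(1) step.prems by (auto simp: trans_graph_def Ptrans_pos_iff)
  obtain n where n: "survival M \<pi> f \<sigma> \<theta> n i' < 1" using step.IH step.prems i' by blast
  have "(\<Sum>k\<in>M. Ptrans \<pi> f \<theta> i k * survival M \<pi> f \<sigma> \<theta> n k) < (\<Sum>k\<in>M. Ptrans \<pi> f \<theta> i k)"
    (is "?x < _")
  proof (rule sum_strict_mono_ex1[OF finite_M])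
    show "\<forall>k\<in>M. Ptrans \<pi> f \<theta> i k * survival M \<pi> f \<sigma> \<theta> n k \<le> Ptrans \<pi> f \<theta> i k"
      using step.prems survival_bounds by (auto intro: mult_left_le simp: Ptrans_nonneg)
    show "\<exists>k\<in>M. Ptrans \<pi> f \<theta> i k * survival M \<pi> f \<sigma> \<theta> n k < Ptrans \<pi> f \<theta> i k"
      using i' n edge by (intro bexI[of _ i']) simp_all
  qed
  moreover have "0 \<le> ?x"
    using survival_bounds by (intro sum_nonneg mult_nonneg_nonneg) (auto simp: Ptrans_nonneg step.prems)
  then have "survival M \<pi> f \<sigma> \<theta> (Suc n) i \<le> ?x"
    using stopP_bounds[OF strategy step.prems(2), where f=f and \<theta>=\<theta>] by (simp add: mult_left_le_one_le)
  ultimately have "survival M \<pi> f \<sigma> \<theta> (Suc n) i < 1"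
    using Ptrans_sum[OF step.prems(2)] by simp
  then show ?case ..
qed

lemma decseq_alive_mass: "decseq (\<lambda>t. \<Sum>i\<in>M. alive M \<pi> f g \<sigma> \<theta> t i)"
proof (rule decseq_SucI)
  fix t
  show "(\<Sum>i\<in>M. alive M \<pi> f g \<sigma> \<theta> (Suc t) i) \<le> (\<Sum>i\<in>M. alive M \<pi> f g \<sigma> \<theta> t i)"
    unfolding alive_mass_Suc using strategy
    by (intro sum_mono mult_left_le) (auto simp: alive_nonneg stopP_bounds)
qed

lemma alive_mass_tendsto_0:
  assumes reach: "\<forall>i\<in>M. \<exists>j. (i, j) \<in> (trans_graph M f)\<^sup>* \<and> 0 < stopP f \<sigma> \<theta> j"
  shows "(\<lambda>t. \<Sum>i\<in>M. alive M \<pi> f g \<sigma> \<theta> t i) \<longlonglongrightarrow> 0"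
proof -
  let ?N = "\<lambda>t. \<Sum>i\<in>M. alive M \<pi> f g \<sigma> \<theta> t i"
  have "\<forall>i\<in>M. \<exists>n. survival M \<pi> f \<sigma> \<theta> n i < 1"
    using reach survival_lt_1 by blast
  then obtain n where n: "\<forall>i\<in>M. survival M \<pi> f \<sigma> \<theta> (n i) i < 1"
    by metis
  define K where "K = (\<Sum>i\<in>M. n i)"
  define c where "c = Max ((\<lambda>i. survival M \<pi> f \<sigma> \<theta> K i) ` M)"
  have "survival M \<pi> f \<sigma> \<theta> K i < 1" if i: "i \<in> M" for i
  proof -
    have "n i \<le> K" unfolding K_def using i finite_M by (intro member_le_sum) auto
    then show ?thesis using decseqD[OF decseq_survival[OF i]] n i by (blast intro: order.strict_trans1)
  qed
  then have "c < 1" unfolding c_def using finite_M M_nonempty by simp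
  have contraction: "?N (t + K) \<le> c * ?N t" for t
  proof -
    have "?N (t + K) \<le> (\<Sum>i\<in>M. alive M \<pi> f g \<sigma> \<theta> t i * c)"
      unfolding alive_mass_shift c_def using finite_M strategy
      by (intro sum_mono mult_left_mono) (auto simp: alive_nonneg)
    then show ?thesis by (simp add: sum_distrib_left mult_ac)
  qed
  have "\<forall>t. 0 \<le> ?N t" using alive_mass_nonneg[OF strategy] by blast
  then obtain L where L: "?N \<longlonglongrightarrow> L" "\<forall>t. L \<le> ?N t"
    using decseq_convergent[OF decseq_alive_mass] by blast
  have "L \<le> c * L"
    using LIMSEQ_le[OF LIMSEQ_ignore_initial_segment[OF L(1), of K] tendsto_mult_left[OF L(1)]]
      contraction by blast
  then have "L \<le> 0" using \<open>c < 1\<close> by (simp add: mult_le_cancel_right1)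
  moreover have "0 \<le> L" using LIMSEQ_le_const[OF L(1)] alive_mass_nonneg[OF strategy] by blast
  ultimately show ?thesis using L(1) by simp
qed

end

lemma prob_H_stop_only_at:
  assumes "valid_strategy M \<rho>" and stop: "\<forall>i\<in>M. stopP f \<rho> \<theta> i = indicator {i1} i"
    and reach: "\<forall>i\<in>M. (i, i1) \<in> (trans_graph M f)\<^sup>*" and i1: "i1 \<in> M"
  shows "prob_H M \<pi> f g \<rho> \<theta> b = b i1"
proof -
  have "\<forall>i\<in>M. \<exists>j. (i, j) \<in> (trans_graph M f)\<^sup>* \<and> 0 < stopP f \<rho> \<theta> j"
    using reach stop i1 by fastforce
  then have total: "(\<Sum>i\<in>M. endprob M \<pi> f g \<rho> \<theta> i) = 1"
    using assms(1) by (intro endprob_total_eq_1 alive_mass_tendsto_0)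
  have "endprob M \<pi> f g \<rho> \<theta> i = 0" if "i \<in> M" "i \<noteq> i1" for i
    using stop that by (simp add: endprob_def)
  then have "(\<Sum>i\<in>M. endprob M \<pi> f g \<rho> \<theta> i * h i) = endprob M \<pi> f g \<rho> \<theta> i1 * h i1" for h
    using i1 finite_M by (subst sum.remove) (auto intro: sum.neutral)
  from this[of b] this[of "\<lambda>_. 1"] show ?thesis using total by (simp add: prob_H_def)
qed

end

section \<open>Transience\<close>

lemma trancl_first_step_avoiding:
  assumes "(x, y) \<in> R\<^sup>+"
  shows "\<exists>z. (x, z) \<in> R \<and> (z, y) \<in> (R \<inter> {(u, v). u \<noteq> x})\<^sup>*"
  using assms
proof (induction rule: trancl_induct)
  case (step y z)
  then obtain z' where z': "(x, z') \<in> R" "(z', y) \<in> (R \<inter> {(u, v). u \<noteq> x})\<^sup>*" by blast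
  show ?case
  proof (cases "y = x")
    case False
    then show ?thesis using z' step.hyps(2) by (blast intro: rtrancl_into_rtrancl)
  qed (use step.hyps(2) in blast)
qed blast

context protocol_game
begin

lemma absorbing_rtrancl_eq:
  assumes i: "i \<in> M" and absorbing: "absorbing f i" and path: "(i, k) \<in> (trans_graph M f)\<^sup>*"
  shows "k = i"
  using path
proof (induction rule: rtrancl_induct)
  case (step y z)
  then obtain s where s: "0 < f i s z" "z \<in> M" by (auto simp: trans_graph_def)
  have "(\<Sum>j\<in>M - {i}. f i s j) = 0"
    using f_sum[OF i, of s] absorbing finite_M i by (simp add: absorbing_def sum.remove)
  then have "\<forall>j\<in>M - {i}. f i s j = 0"
    using finite_M i by (subst sum_nonneg_eq_0_iff[symmetric]) (auto simp: f_nonneg)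
  then show "z = i" using s by (metis DiffI less_irrefl singletonD)
qed simp

context
  fixes \<theta> :: theta and i :: nat
  assumes i: "i \<in> M"
begin

lemma taboo_nonneg: "j \<in> M \<Longrightarrow> 0 \<le> taboo M \<pi> f \<theta> i n j"
proof (induction n arbitrary: j)
  case (Suc n)
  then show ?case by (simp, intro sum_nonneg mult_nonneg_nonneg) (auto simp: Ptrans_nonneg)
qed (simp add: i Ptrans_nonneg)

lemma taboo_partial_sum: "(\<Sum>n<N. taboo M \<pi> f \<theta> i n i) = 1 - (\<Sum>j\<in>M. taboo M \<pi> f \<theta> i N j)"
proof (induction N)
  case 0
  then show ?case by (simp add: i Ptrans_sum)
next
  case (Suc N)
  have "(\<Sum>j\<in>M. taboo M \<pi> f \<theta> i (Suc N) j) = (\<Sum>k\<in>M - {i}. \<Sum>j\<in>M. taboo M \<pi> f \<theta> i N k * Ptrans \<pi> f \<theta> k j)"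
    unfolding taboo.simps by (rule sum.swap)
  also have "\<dots> = (\<Sum>k\<in>M - {i}. taboo M \<pi> f \<theta> i N k)"
    by (intro sum.cong) (auto simp: sum_distrib_left[symmetric] Ptrans_sum)
  also have "\<dots> = (\<Sum>j\<in>M. taboo M \<pi> f \<theta> i N j) - taboo M \<pi> f \<theta> i N i"
    using finite_M i by (simp add: sum_diff1)
  finally show ?case using Suc by simp
qed

lemma taboo_absorbing_Suc_ge:
  assumes k: "k \<in> M" "k \<noteq> i" "absorbing f k"
  shows "taboo M \<pi> f \<theta> i n k \<le> taboo M \<pi> f \<theta> i (Suc n) k"
proof -
  have "Ptrans \<pi> f \<theta> k k = 1"
    using k(3) signal_sum by (simp add: Ptrans_def absorbing_def)
  then have "taboo M \<pi> f \<theta> i n k = taboo M \<pi> f \<theta> i n k * Ptrans \<pi> f \<theta> k k" by simp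
  also have "\<dots> \<le> (\<Sum>k'\<in>M - {i}. taboo M \<pi> f \<theta> i n k' * Ptrans \<pi> f \<theta> k' k)"
    using k finite_M
    by (intro member_le_sum) (auto intro: mult_nonneg_nonneg simp: taboo_nonneg Ptrans_nonneg)
  finally show ?thesis by simp
qed

lemma taboo_pos_if_path:
  assumes "(i, j) \<in> trans_graph M f" "(j, k) \<in> (trans_graph M f \<inter> {(y, z). y \<noteq> i})\<^sup>*"
  shows "\<exists>n. 0 < taboo M \<pi> f \<theta> i n k"
  using assms(2)
proof (induction rule: rtrancl_induct)
  case base
  then show ?case using assms(1) i by (intro exI[of _ 0]) (simp add: trans_graph_def Ptrans_pos_iff)
next
  case (step y z)
  then obtain n where n: "0 < taboo M \<pi> f \<theta> i n y" by blast
  have yz: "y \<in> M" "z \<in> M" "y \<noteq> i" "0 < Ptrans \<pi> f \<theta> y z"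
    using step.hyps(2) by (auto simp: trans_graph_def Ptrans_pos_iff)
  have "0 < taboo M \<pi> f \<theta> i n y * Ptrans \<pi> f \<theta> y z"
    using n yz by simp
  also have "\<dots> \<le> (\<Sum>k'\<in>M - {i}. taboo M \<pi> f \<theta> i n k' * Ptrans \<pi> f \<theta> k' z)"
    using yz finite_M
    by (intro member_le_sum) (auto intro: mult_nonneg_nonneg simp: taboo_nonneg Ptrans_nonneg)
  finally show ?case by (intro exI[of _ "Suc n"]) simp
qed

lemma transient_if_reaches_absorbing:
  assumes k: "k \<in> M" "k \<noteq> i" "absorbing f k" and path: "(i, k) \<in> (trans_graph M f)\<^sup>*"
  shows "transient M \<pi> f \<theta> i"
proof -
  have "(i, k) \<in> (trans_graph M f)\<^sup>+"
    using rtranclD[OF path] k(2) by blast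
  then obtain j where "(i, j) \<in> trans_graph M f" "(j, k) \<in> (trans_graph M f \<inter> {(y, z). y \<noteq> i})\<^sup>*"
    by (blast dest: trancl_first_step_avoiding)
  then obtain n0 where n0: "0 < taboo M \<pi> f \<theta> i n0 k"
    by (blast dest: taboo_pos_if_path)
  define c where "c = taboo M \<pi> f \<theta> i n0 k"
  have grow: "c \<le> taboo M \<pi> f \<theta> i (n0 + d) k" for d
  proof (induction d)
    case (Suc d)
    then show ?case using taboo_absorbing_Suc_ge[OF k, of "n0 + d"] by (metis add_Suc_right order_trans)
  qed (simp add: c_def)
  have le_mass: "taboo M \<pi> f \<theta> i N k \<le> (\<Sum>j\<in>M. taboo M \<pi> f \<theta> i N j)" for N
    using k finite_M by (intro member_le_sum) (auto simp: taboo_nonneg)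
  have "(\<Sum>n<n0 + d. taboo M \<pi> f \<theta> i n i) \<le> 1 - c" for d
    using taboo_partial_sum[of "n0 + d"] grow[of d] le_mass[of "n0 + d"] by linarith
  moreover have "(\<Sum>n<N. taboo M \<pi> f \<theta> i n i) \<le> (\<Sum>n<n0 + N. taboo M \<pi> f \<theta> i n i)" for N
    using i by (intro sum_mono2) (auto simp: taboo_nonneg)
  ultimately have bound: "(\<Sum>n<N. taboo M \<pi> f \<theta> i n i) \<le> 1 - c" for N
    by (meson order_trans)
  have "summable (\<lambda>n. taboo M \<pi> f \<theta> i n i)"
    using i bound by (intro summableI_nonneg_bounded[where x="1 - c"]) (auto simp: taboo_nonneg)
  then have "return_prob M \<pi> f \<theta> i \<le> 1 - c"
    unfolding return_prob_def using bound by (rule suminf_le_const)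
  then show ?thesis unfolding transient_def c_def using n0 by simp
qed

end

end

section \<open>Stopping at local maxima\<close>

definition local_max_states :: "nat set \<Rightarrow> (nat \<Rightarrow> 's \<Rightarrow> nat \<Rightarrow> real) \<Rightarrow> (nat \<Rightarrow> real) \<Rightarrow> nat set" where
  "local_max_states M f a = {i \<in> M. \<forall>j. (i, j) \<in> (trans_graph M f)\<^sup>* \<longrightarrow> a j \<le> a i}"

definition stop_at :: "nat set \<Rightarrow> (nat \<Rightarrow> theta \<Rightarrow> real) \<Rightarrow> nat \<Rightarrow> theta \<Rightarrow> real" where
  "stop_at F \<sigma> i \<theta> = (if i \<in> F then 1 else \<sigma> i \<theta>)"

lemma valid_strategy_stop_at: "valid_strategy M \<sigma> \<Longrightarrow> valid_strategy M (stop_at F \<sigma>)"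
  by (simp add: valid_strategy_def stop_at_def)

lemma stop_at_empty [simp]: "stop_at {} \<sigma> = \<sigma>"
  by (simp add: stop_at_def fun_eq_iff)

lemma stop_at_insert: "stop_at (insert i F) \<sigma> = stop_at {i} (stop_at F \<sigma>)"
  by (auto simp: stop_at_def fun_eq_iff)

lemma stopP_stop_at: "stopP f (stop_at F \<sigma>) \<theta> i = (if i \<in> F then 1 else stopP f \<sigma> \<theta> i)"
  by (simp add: stopP_def stop_at_def)

context protocol_game
begin

lemma reaches_local_max:
  assumes i: "i \<in> M"
  shows "\<exists>j\<in>local_max_states M f a. (i, j) \<in> (trans_graph M f)\<^sup>*"
proof -
  define R where "R = {j. (i, j) \<in> (trans_graph M f)\<^sup>*}"
  have "R \<subseteq> M" using i rtrancl_trans_graph_in unfolding R_def by blast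
  then have fin: "finite (a ` R)" using finite_M by (simp add: finite_subset)
  have "i \<in> R" by (simp add: R_def)
  then have "Max (a ` R) \<in> a ` R" using fin by (intro Max_in) auto
  then obtain j where j: "j \<in> R" "a j = Max (a ` R)" by auto
  have "a k \<le> a j" if "k \<in> R" for k using fin that j(2) by simp
  then have "j \<in> local_max_states M f a"
    using j(1) \<open>R \<subseteq> M\<close> unfolding local_max_states_def R_def by (auto intro: rtrancl_trans)
  then show ?thesis using j(1) unfolding R_def by blast
qed

lemma absorbing_local_max:
  assumes "i \<in> M" "absorbing f i"
  shows "i \<in> local_max_states M f a"
  unfolding local_max_states_def using absorbing_rtrancl_eq[OF assms] assms(1) by blast

context
  fixes \<sigma> :: "nat \<Rightarrow> theta \<Rightarrow> real" and \<theta> :: theta and i0 :: nat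
  assumes strategy: "valid_strategy M \<sigma>" and i0: "i0 \<in> local_max_states M f a"
begin

lemma alive_stop_at_le:
  "j \<in> M \<Longrightarrow> alive M \<pi> f g (stop_at {i0} \<sigma>) \<theta> t j \<le> alive M \<pi> f g \<sigma> \<theta> t j \<and>
     ((i0, j) \<notin> (trans_graph M f)\<^sup>* \<longrightarrow> alive M \<pi> f g (stop_at {i0} \<sigma>) \<theta> t j = alive M \<pi> f g \<sigma> \<theta> t j)"
proof (induction t arbitrary: j)
  case (Suc t)
  let ?x = "\<lambda>i. alive M \<pi> f g \<sigma> \<theta> t i * (1 - stopP f \<sigma> \<theta> i) * Ptrans \<pi> f \<theta> i j"
  let ?y = "\<lambda>i. alive M \<pi> f g (stop_at {i0} \<sigma>) \<theta> t i * (1 - stopP f (stop_at {i0} \<sigma>) \<theta> i) * Ptrans \<pi> f \<theta> i j"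
  have "?y i \<le> ?x i" if i: "i \<in> M" for i
    using Suc.IH[OF i] Suc.prems i strategy
    by (cases "i = i0")
      (auto simp: stopP_stop_at stopP_bounds alive_nonneg Ptrans_nonneg intro!: mult_right_mono mult_nonneg_nonneg)
  moreover have "?y i = ?x i" if i: "i \<in> M" and j: "(i0, j) \<notin> (trans_graph M f)\<^sup>*" for i
  proof (cases "(i, j) \<in> trans_graph M f")
    case True
    then have "(i0, i) \<notin> (trans_graph M f)\<^sup>*" using j by (meson rtrancl.rtrancl_into_rtrancl)
    then show ?thesis using Suc.IH[OF i] by (auto simp: stopP_stop_at)
  next
    case False
    then have "Ptrans \<pi> f \<theta> i j = 0"
      using Ptrans_nonneg[OF i Suc.prems, of \<theta>] Ptrans_pos_iff[OF i Suc.prems, of \<theta>] by simp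
    then show ?thesis by simp
  qed
  ultimately show ?case by (auto intro: sum_mono sum.cong)
qed simp

lemma ended_mass_diff:
  "(\<Sum>i\<in>M. alive M \<pi> f g \<sigma> \<theta> t i * stopP f \<sigma> \<theta> i
      - alive M \<pi> f g (stop_at {i0} \<sigma>) \<theta> t i * stopP f (stop_at {i0} \<sigma>) \<theta> i) =
   (\<Sum>i\<in>M. alive M \<pi> f g \<sigma> \<theta> t i - alive M \<pi> f g (stop_at {i0} \<sigma>) \<theta> t i)
   - (\<Sum>i\<in>M. alive M \<pi> f g \<sigma> \<theta> (Suc t) i - alive M \<pi> f g (stop_at {i0} \<sigma>) \<theta> (Suc t) i)"
  unfolding sum_subtractf alive_mass_Suc by (simp add: algebra_simps sum_subtractf)

lemma ended_H_diff_le: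
  "(\<Sum>i\<in>M. (alive M \<pi> f g \<sigma> \<theta> t i * stopP f \<sigma> \<theta> i
      - alive M \<pi> f g (stop_at {i0} \<sigma>) \<theta> t i * stopP f (stop_at {i0} \<sigma>) \<theta> i) * a i) \<le>
   a i0 * (\<Sum>i\<in>M. alive M \<pi> f g \<sigma> \<theta> t i * stopP f \<sigma> \<theta> i
      - alive M \<pi> f g (stop_at {i0} \<sigma>) \<theta> t i * stopP f (stop_at {i0} \<sigma>) \<theta> i)"
  unfolding sum_distrib_left
proof (rule sum_mono)
  fix i assume i: "i \<in> M"
  let ?d = "alive M \<pi> f g \<sigma> \<theta> t i - alive M \<pi> f g (stop_at {i0} \<sigma>) \<theta> t i"
  show "(alive M \<pi> f g \<sigma> \<theta> t i * stopP f \<sigma> \<theta> i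
      - alive M \<pi> f g (stop_at {i0} \<sigma>) \<theta> t i * stopP f (stop_at {i0} \<sigma>) \<theta> i) * a i \<le>
    a i0 * (alive M \<pi> f g \<sigma> \<theta> t i * stopP f \<sigma> \<theta> i
      - alive M \<pi> f g (stop_at {i0} \<sigma>) \<theta> t i * stopP f (stop_at {i0} \<sigma>) \<theta> i)"
  proof (cases "i = i0")
    case False
    have "?d * stopP f \<sigma> \<theta> i * a i \<le> ?d * stopP f \<sigma> \<theta> i * a i0"
    proof (cases "(i0, i) \<in> (trans_graph M f)\<^sup>*")
      case True
      then have "a i \<le> a i0" using i0 by (simp add: local_max_states_def)
      moreover have "0 \<le> ?d * stopP f \<sigma> \<theta> i"
        using alive_stop_at_le[OF i, of t] strategy i by (simp add: stopP_bounds)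
      ultimately show ?thesis by (rule mult_left_mono)
    qed (use alive_stop_at_le[OF i, of t] in simp)
    then show ?thesis using False by (simp add: stopP_stop_at algebra_simps)
  qed simp
qed

lemma prob_H_le_stop_at_local_max: "prob_H M \<pi> f g \<sigma> \<theta> a \<le> prob_H M \<pi> f g (stop_at {i0} \<sigma>) \<theta> a"
proof -
  define D where "D t = (\<Sum>i\<in>M. alive M \<pi> f g \<sigma> \<theta> t i - alive M \<pi> f g (stop_at {i0} \<sigma>) \<theta> t i)" for t
  define E where "E t = (\<Sum>i\<in>M. alive M \<pi> f g \<sigma> \<theta> t i * stopP f \<sigma> \<theta> i * a i
      - alive M \<pi> f g (stop_at {i0} \<sigma>) \<theta> t i * stopP f (stop_at {i0} \<sigma>) \<theta> i * a i)" for t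
  have "E sums (prob_H M \<pi> f g \<sigma> \<theta> a - prob_H M \<pi> f g (stop_at {i0} \<sigma>) \<theta> a)"
    unfolding E_def sum_subtractf
    using strategy valid_strategy_stop_at by (intro sums_diff sums_prob_H)
  moreover have "(\<Sum>t<T. E t) \<le> 0" for T
  proof -
    have "E t \<le> a i0 * (D t - D (Suc t))" for t
      using ended_H_diff_le[of t] unfolding E_def D_def ended_mass_diff[symmetric]
      by (simp add: algebra_simps)
    then have "(\<Sum>t<T. E t) \<le> (\<Sum>t<T. a i0 * (D t - D (Suc t)))"
      by (rule sum_mono)
    also have "\<dots> = a i0 * (D 0 - D T)"
      by (simp add: sum_distrib_left[symmetric] sum_lessThan_telescope')
    finally have "(\<Sum>t<T. E t) \<le> a i0 * (D 0 - D T)" .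
    moreover have "D 0 = 0" by (simp add: D_def)
    moreover have "0 \<le> a i0 * D T"
    proof -
      have "0 \<le> D T" unfolding D_def using alive_stop_at_le by (intro sum_nonneg) simp
      then show ?thesis using i0 a_bounds by (simp add: local_max_states_def)
    qed
    ultimately show ?thesis by simp
  qed
  ultimately have "prob_H M \<pi> f g \<sigma> \<theta> a - prob_H M \<pi> f g (stop_at {i0} \<sigma>) \<theta> a \<le> 0"
    by (metis sums_iff suminf_le_const)
  then show ?thesis by simp
qed

end

lemma prob_H_le_stop_at_local_maxima:
  assumes "valid_strategy M \<sigma>" and "F \<subseteq> local_max_states M f a"
  shows "prob_H M \<pi> f g \<sigma> \<theta> a \<le> prob_H M \<pi> f g (stop_at F \<sigma>) \<theta> a"
proof -
  have "local_max_states M f a \<subseteq> M" by (auto simp: local_max_states_def)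
  then have "finite F" using assms(2) finite_M by (meson finite_subset)
  then show ?thesis
    using assms(2)
  proof (induction F rule: finite_induct)
    case (insert i F)
    then have "prob_H M \<pi> f g \<sigma> \<theta> a \<le> prob_H M \<pi> f g (stop_at F \<sigma>) \<theta> a" by simp
    also have "\<dots> \<le> prob_H M \<pi> f g (stop_at {i} (stop_at F \<sigma>)) \<theta> a"
      using insert.prems assms(1) valid_strategy_stop_at by (intro prob_H_le_stop_at_local_max) auto
    finally show ?case by (simp only: stop_at_insert[of i F])
  qed simp
qed

lemma UR_le_stop_at_local_maxima:
  assumes br: "\<sigma> \<in> br p M \<pi> f g a" and p: "0 < p" "p < 1"
    and \<rho>: "\<rho> = stop_at (local_max_states M f a) (\<lambda>i _. \<sigma> i H)"
  shows "UR p M \<pi> f g a \<sigma> \<le> p * prob_H M \<pi> f g \<rho> H a + (1 - p) * (1 - prob_H M \<pi> f g \<rho> L a)"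
proof -
  have \<sigma>: "valid_strategy M \<sigma>" using br by (simp add: br_def)
  then have "valid_strategy M \<rho>" by (auto simp: \<rho> valid_strategy_def stop_at_def)
  then have "prob_H M \<pi> f g \<rho> L a \<le> prob_H M \<pi> f g \<sigma> L a"
    using br p by (intro best_response_prob_H_L_le)
  moreover have "prob_H M \<pi> f g \<sigma> H a \<le> prob_H M \<pi> f g (stop_at (local_max_states M f a) \<sigma>) H a"
    using \<sigma> by (intro prob_H_le_stop_at_local_maxima) auto
  moreover have "prob_H M \<pi> f g (stop_at (local_max_states M f a) \<sigma>) H a = prob_H M \<pi> f g \<rho> H a"
    by (rule prob_H_cong) (simp add: \<rho> stop_at_def)
  ultimately show ?thesis
    using p by (intro UR_le_prob_H_bounds[OF \<sigma>]) auto
qed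

end

section \<open>Collapsing a protocol onto two absorbing states\<close>

lemma sum_remove_two:
  assumes "finite M" "k1 \<in> M" "k2 \<in> M" "k1 \<noteq> k2"
  shows "(\<Sum>j\<in>M. h j) = h k1 + h k2 + (\<Sum>j\<in>M - {k1, k2}. h j)"
proof -
  have "(\<Sum>j\<in>M. h j) = h k1 + (\<Sum>j\<in>M - {k1}. h j)" using assms by (simp add: sum.remove)
  also have "(\<Sum>j\<in>M - {k1}. h j) = h k2 + (\<Sum>j\<in>M - {k1} - {k2}. h j)"
    using assms by (intro sum.remove) auto
  finally show ?thesis by (simp add: Diff_insert2[symmetric] add.assoc)
qed

text \<open>The collapsed protocol runs the chain of f, but whenever the original game would end in a
  state i (probability e i) or enter a state i in {k1, k2}, it moves instead to the absorbing
  state k1 with probability a i and to the absorbing state k2 otherwise.\<close>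

definition collapse_trans ::
  "(nat \<Rightarrow> 's \<Rightarrow> nat \<Rightarrow> real) \<Rightarrow> (nat \<Rightarrow> real) \<Rightarrow> (nat \<Rightarrow> real) \<Rightarrow> nat \<Rightarrow> nat \<Rightarrow> nat \<Rightarrow> 's \<Rightarrow> nat \<Rightarrow> real" where
  "collapse_trans f a e k1 k2 i s j =
    (if i = k1 \<or> i = k2 then (if j = i then 1 else 0)
     else if j = k1 then e i * a i + (1 - e i) * (f i s k1 * a k1 + f i s k2 * a k2)
     else if j = k2 then e i * (1 - a i) + (1 - e i) * (f i s k1 * (1 - a k1) + f i s k2 * (1 - a k2))
     else (1 - e i) * f i s j)"

definition collapse_init :: "(nat \<Rightarrow> real) \<Rightarrow> (nat \<Rightarrow> real) \<Rightarrow> nat \<Rightarrow> nat \<Rightarrow> nat \<Rightarrow> real" where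
  "collapse_init g a k1 k2 j =
    (if j = k1 then g k1 * a k1 + g k2 * a k2
     else if j = k2 then g k1 * (1 - a k1) + g k2 * (1 - a k2) else g j)"

locale collapse_setting = protocol_game +
  fixes e :: "nat \<Rightarrow> real" and k1 k2 :: nat
  assumes k1: "k1 \<in> M" and k2: "k2 \<in> M" and k1_ne_k2: "k1 \<noteq> k2"
    and e_bounds: "i \<in> M \<Longrightarrow> 0 \<le> e i \<and> e i \<le> 1"
    and e_k1: "e k1 = 1" and e_k2: "e k2 = 1"
begin

abbreviation "f' \<equiv> collapse_trans f a e k1 k2"
abbreviation "g' \<equiv> collapse_init g a k1 k2"

lemma collapse_trans_nonneg: "i \<in> M \<Longrightarrow> j \<in> M \<Longrightarrow> 0 \<le> f' i s j"
  unfolding collapse_trans_def using f_nonneg a_bounds e_bounds k1 k2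
  by (auto intro!: add_nonneg_nonneg mult_nonneg_nonneg)

lemma collapse_trans_exits:
  "i \<notin> {k1, k2} \<Longrightarrow> f' i s k1 + f' i s k2 = e i + (1 - e i) * (f i s k1 + f i s k2)"
  using k1_ne_k2 by (simp add: collapse_trans_def algebra_simps)

lemma collapse_trans_sum: "i \<in> M \<Longrightarrow> (\<Sum>j\<in>M. f' i s j) = 1"
proof (cases "i \<in> {k1, k2}")
  case True
  assume "i \<in> M"
  then show ?thesis using True finite_M by (auto simp: collapse_trans_def)
next
  case False
  assume i: "i \<in> M"
  have "(\<Sum>j\<in>M - {k1, k2}. f' i s j) = (1 - e i) * (\<Sum>j\<in>M - {k1, k2}. f i s j)"
    using False by (auto simp: collapse_trans_def sum_distrib_left intro: sum.cong)
  then have "(\<Sum>j\<in>M. f' i s j) = f' i s k1 + f' i s k2 + (1 - e i) * (\<Sum>j\<in>M - {k1, k2}. f i s j)"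
    using sum_remove_two[OF finite_M k1 k2 k1_ne_k2, of "f' i s"] by simp
  also have "\<dots> = e i + (1 - e i) * (f i s k1 + f i s k2 + (\<Sum>j\<in>M - {k1, k2}. f i s j))"
    using collapse_trans_exits[OF False] by (simp add: algebra_simps)
  also have "\<dots> = 1"
    using sum_remove_two[OF finite_M k1 k2 k1_ne_k2, of "f i s"] f_sum[OF i] by simp
  finally show ?thesis .
qed

lemma is_protocol_collapse: "is_protocol M f' g' (indicator {k1})"
proof -
  have "(\<Sum>j\<in>M. g' j) = 1"
    using sum_remove_two[OF finite_M k1 k2 k1_ne_k2, of g'] g_sum
      sum_remove_two[OF finite_M k1 k2 k1_ne_k2, of g] k1_ne_k2
    by (simp add: collapse_init_def algebra_simps)
  moreover have "0 \<le> g' j" if "j \<in> M" for j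
    using that g_nonneg a_bounds k1 k2 unfolding collapse_init_def
    by (auto intro!: add_nonneg_nonneg mult_nonneg_nonneg)
  ultimately show ?thesis
    using finite_M collapse_trans_nonneg collapse_trans_sum
    by (simp add: is_protocol_def is_dist_def split: split_indicator)
qed

lemma absorbing_collapse: "absorbing f' k1" "absorbing f' k2"
  by (auto simp: absorbing_def collapse_trans_def)

lemma Ptrans_collapse_inner:
  "i \<notin> {k1, k2} \<Longrightarrow> j \<notin> {k1, k2} \<Longrightarrow> Ptrans \<pi> f' \<theta> i j = (1 - e i) * Ptrans \<pi> f \<theta> i j"
  by (auto simp: Ptrans_def collapse_trans_def sum_distrib_left algebra_simps)

lemma Ptrans_collapse_k1:
  assumes "i \<notin> {k1, k2}"
  shows "Ptrans \<pi> f' \<theta> i k1 =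
    e i * a i + (1 - e i) * (Ptrans \<pi> f \<theta> i k1 * a k1 + Ptrans \<pi> f \<theta> i k2 * a k2)"
proof -
  have "Ptrans \<pi> f' \<theta> i k1 = (\<Sum>s\<in>UNIV. e i * a i * \<pi> \<theta> s
      + (1 - e i) * a k1 * (\<pi> \<theta> s * f i s k1) + (1 - e i) * a k2 * (\<pi> \<theta> s * f i s k2))"
    unfolding Ptrans_def using assms by (intro sum.cong) (auto simp: collapse_trans_def algebra_simps)
  also have "\<dots> = e i * a i * (\<Sum>s\<in>UNIV. \<pi> \<theta> s)
      + (1 - e i) * a k1 * Ptrans \<pi> f \<theta> i k1 + (1 - e i) * a k2 * Ptrans \<pi> f \<theta> i k2"
    unfolding Ptrans_def by (simp only: sum.distrib sum_distrib_left[symmetric])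
  finally show ?thesis by (simp add: signal_sum algebra_simps)
qed

lemma collapse_exit_edge:
  assumes "i \<in> M - {k1, k2}" "0 < e i \<or> 0 < f i s k1 + f i s k2"
  shows "(i, k1) \<in> trans_graph M f' \<or> (i, k2) \<in> trans_graph M f'"
proof -
  have f: "0 \<le> f i s k1 + f i s k2" and e: "0 \<le> e i" "e i \<le> 1"
    using assms(1) k1 k2 f_nonneg e_bounds by (auto intro: add_nonneg_nonneg)
  have "0 < e i + (1 - e i) * (f i s k1 + f i s k2)"
  proof (cases "0 < e i")
    case True
    then show ?thesis using f e by (simp add: add_pos_nonneg)
  next
    case False
    then show ?thesis using assms(2) e by simp
  qed
  then have "0 < f' i s k1 + f' i s k2"
    using assms(1) collapse_trans_exits[of i s] by simp
  then show ?thesis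
    using assms(1) k1 k2 collapse_trans_nonneg[of i k1 s] collapse_trans_nonneg[of i k2 s]
    by (auto simp: trans_graph_def) (metis add_nonneg_eq_0_iff order_le_less)
qed

lemma collapse_reaches_ends:
  assumes "(i, j) \<in> (trans_graph M f)\<^sup>*" "0 < e j" "i \<in> M"
  shows "\<exists>k\<in>{k1, k2}. (i, k) \<in> (trans_graph M f')\<^sup>*"
  using assms
proof (induction rule: converse_rtrancl_induct)
  case base
  then show ?case using collapse_exit_edge by blast
next
  case (step y z)
  obtain s where s: "0 < f y s z" and z: "z \<in> M"
    using step.hyps(1) by (auto simp: trans_graph_def)
  consider "y \<in> {k1, k2}" | "y \<notin> {k1, k2}" "0 < e y \<or> z \<in> {k1, k2}"
    | "y \<notin> {k1, k2}" "\<not> 0 < e y" "z \<notin> {k1, k2}" by blast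
  then show ?case
  proof cases
    case 1
    then show ?thesis by blast
  next
    case 2
    have "0 \<le> f y s k1" "0 \<le> f y s k2" using step.prems(2) k1 k2 f_nonneg by auto
    then have "0 < e y \<or> 0 < f y s k1 + f y s k2" using 2(2) s by auto
    then show ?thesis using collapse_exit_edge[of y s] 2(1) step.prems(2) by blast
  next
    case 3
    then have "e y = 0" using e_bounds[OF step.prems(2)] by simp
    then have "(y, z) \<in> trans_graph M f'"
      using 3 s z step.prems(2) by (auto simp: trans_graph_def collapse_trans_def)
    moreover obtain k where "k \<in> {k1, k2}" "(z, k) \<in> (trans_graph M f')\<^sup>*"
      using step.IH step.prems(1) z by blast
    ultimately show ?thesis by (meson converse_rtrancl_into_rtrancl)
  qed
qed

sublocale collapsed: protocol_game M \<pi> f' g' "indicator {k1}"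
  using is_protocol_collapse signals by unfold_locales

context
  assumes reach: "\<forall>i\<in>M. \<exists>j. (i, j) \<in> (trans_graph M f)\<^sup>* \<and> 0 < e j"
begin

lemma collapse_reaches_ends_all: "\<forall>i\<in>M. \<exists>k\<in>{k1, k2}. (i, k) \<in> (trans_graph M f')\<^sup>*"
  using reach collapse_reaches_ends by blast

lemma absorbing_collapse_iff: "i \<in> M \<Longrightarrow> absorbing f' i \<longleftrightarrow> i \<in> {k1, k2}"
  using collapse_reaches_ends_all collapsed.absorbing_rtrancl_eq absorbing_collapse by blast

context
  fixes \<rho> :: "nat \<Rightarrow> theta \<Rightarrow> real" and \<theta> :: theta
  assumes strategy: "valid_strategy M \<rho>" and e_stopP: "\<And>i. i \<in> M \<Longrightarrow> e i = stopP f \<rho> \<theta> i"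
begin

lemma alive_collapse_Suc:
  "alive M \<pi> f' g' (\<lambda>_ _. 0) \<theta> (Suc t) j =
     (\<Sum>i\<in>M - {k1, k2}. alive M \<pi> f' g' (\<lambda>_ _. 0) \<theta> t i * Ptrans \<pi> f' \<theta> i j)"
proof -
  have "stopP f' (\<lambda>_ _. 0) \<theta> i = (if i \<in> {k1, k2} then 1 else 0)" if "i \<in> M" for i
    using absorbing_collapse_iff[OF that] by (simp add: stopP_def)
  then show ?thesis
    unfolding alive.simps by (intro sum.mono_neutral_cong_right) (auto simp: finite_M)
qed

lemma alive_Suc_outside_ends:
  "alive M \<pi> f g \<rho> \<theta> (Suc t) j =
     (\<Sum>i\<in>M - {k1, k2}. alive M \<pi> f g \<rho> \<theta> t i * (1 - e i) * Ptrans \<pi> f \<theta> i j)"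
  unfolding alive.simps using e_k1 e_k2 e_stopP
  by (intro sum.mono_neutral_cong_right) (auto simp: finite_M)

lemma alive_collapse_inner: "j \<in> M - {k1, k2} \<Longrightarrow> alive M \<pi> f' g' (\<lambda>_ _. 0) \<theta> t j = alive M \<pi> f g \<rho> \<theta> t j"
proof (induction t arbitrary: j)
  case 0
  then show ?case by (simp add: collapse_init_def)
next
  case (Suc t)
  then show ?case
    unfolding alive_collapse_Suc alive_Suc_outside_ends
    by (intro sum.cong) (auto simp: Ptrans_collapse_inner)
qed

lemma alive_collapse_k1_Suc:
  "alive M \<pi> f' g' (\<lambda>_ _. 0) \<theta> (Suc t) k1 =
     alive M \<pi> f g \<rho> \<theta> (Suc t) k1 * a k1 + alive M \<pi> f g \<rho> \<theta> (Suc t) k2 * a k2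
     + (\<Sum>i\<in>M - {k1, k2}. alive M \<pi> f g \<rho> \<theta> t i * e i * a i)"
proof -
  have "alive M \<pi> f' g' (\<lambda>_ _. 0) \<theta> (Suc t) k1 =
      (\<Sum>i\<in>M - {k1, k2}. alive M \<pi> f g \<rho> \<theta> t i * e i * a i
        + alive M \<pi> f g \<rho> \<theta> t i * (1 - e i) * Ptrans \<pi> f \<theta> i k1 * a k1
        + alive M \<pi> f g \<rho> \<theta> t i * (1 - e i) * Ptrans \<pi> f \<theta> i k2 * a k2)"
    unfolding alive_collapse_Suc
    by (intro sum.cong) (auto simp: alive_collapse_inner Ptrans_collapse_k1 algebra_simps)
  then show ?thesis
    by (simp add: alive_Suc_outside_ends sum.distrib sum_distrib_right del: alive.simps)
qed

lemma endprob_collapse_k1: "endprob M \<pi> f' g' (\<lambda>_ _. 0) \<theta> k1 = prob_H M \<pi> f g \<rho> \<theta> a"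
proof -
  \<comment> \<open>Endings in k1 or k2 reach k1 in the same period, all other endings one period later.\<close>
  define A where "A t = alive M \<pi> f g \<rho> \<theta> t k1 * a k1 + alive M \<pi> f g \<rho> \<theta> t k2 * a k2" for t
  define B where "B t = (\<Sum>i\<in>M - {k1, k2}. alive M \<pi> f g \<rho> \<theta> t i * e i * a i)" for t
  have AB: "(\<Sum>i\<in>M. alive M \<pi> f g \<rho> \<theta> t i * stopP f \<rho> \<theta> i * a i) = A t + B t" for t
  proof -
    have "(\<Sum>i\<in>M. alive M \<pi> f g \<rho> \<theta> t i * stopP f \<rho> \<theta> i * a i) =
        (\<Sum>i\<in>M. alive M \<pi> f g \<rho> \<theta> t i * e i * a i)"
      by (simp add: e_stopP)
    then show ?thesis
      using sum_remove_two[OF finite_M k1 k2 k1_ne_k2, of "\<lambda>i. alive M \<pi> f g \<rho> \<theta> t i * e i * a i"]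
      by (simp add: A_def B_def e_k1 e_k2)
  qed
  have X: "(\<lambda>t. A t + B t) sums prob_H M \<pi> f g \<rho> \<theta> a"
    using sums_prob_H[OF strategy, of \<theta> a] by (simp add: AB)
  have "0 \<le> A t" "0 \<le> B t" for t
    unfolding A_def B_def using strategy k1 k2 a_bounds e_bounds
    by (auto intro!: add_nonneg_nonneg mult_nonneg_nonneg sum_nonneg simp: alive_nonneg)
  then have "summable A" "summable B"
    using X by (auto intro: summable_comparison_test'[where g="\<lambda>t. A t + B t" and N=0] sums_summable)
  then have "(\<lambda>t. A (Suc t) + B t) sums (suminf A - A 0 + suminf B)"
    by (intro sums_add) (auto simp: sums_Suc_iff summable_sums)
  moreover have "alive M \<pi> f' g' (\<lambda>_ _. 0) \<theta> (Suc t) k1 = A (Suc t) + B t" for t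
    unfolding A_def B_def by (rule alive_collapse_k1_Suc)
  ultimately have "(\<lambda>t. alive M \<pi> f' g' (\<lambda>_ _. 0) \<theta> (Suc t) k1) sums (suminf A - A 0 + suminf B)"
    by simp
  then have "(\<lambda>t. alive M \<pi> f' g' (\<lambda>_ _. 0) \<theta> t k1) sums
      (suminf A - A 0 + suminf B + alive M \<pi> f' g' (\<lambda>_ _. 0) \<theta> 0 k1)"
    by (rule sums_Suc)
  then have "(\<lambda>t. alive M \<pi> f' g' (\<lambda>_ _. 0) \<theta> t k1) sums (suminf A + suminf B)"
    by (simp add: A_def collapse_init_def)
  moreover have "suminf A + suminf B = prob_H M \<pi> f g \<rho> \<theta> a"
    using X \<open>summable A\<close> \<open>summable B\<close> by (metis sums_add summable_sums sums_unique2)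
  ultimately show ?thesis
    unfolding endprob_def using absorbing_collapse by (simp add: sums_iff)
qed

end

end

end

section \<open>Protocols with two absorbing states\<close>

definition parsimonious_guarantee :: "real \<Rightarrow> (theta \<Rightarrow> 's::finite \<Rightarrow> real) \<Rightarrow> nat set
    \<Rightarrow> (nat \<Rightarrow> 's \<Rightarrow> nat \<Rightarrow> real) \<Rightarrow> (nat \<Rightarrow> real) \<Rightarrow> (nat \<Rightarrow> real) \<Rightarrow> real \<Rightarrow> bool" where
  "parsimonious_guarantee p \<pi> M f g a u \<longleftrightarrow>
     is_protocol M f g a \<and> parsimonious M \<pi> f a \<and> br p M \<pi> f g a \<noteq> {} \<and>
     (\<forall>\<sigma>\<in>br p M \<pi> f g a. u \<le> UR p M \<pi> f g a \<sigma>)"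

lemma parsimonious_guarantee_mono:
  "parsimonious_guarantee p \<pi> M f g a u' \<Longrightarrow> u \<le> u' \<Longrightarrow> parsimonious_guarantee p \<pi> M f g a u"
  by (auto simp: parsimonious_guarantee_def)

context protocol_game
begin

lemma alive_le_never_stop:
  "valid_strategy M \<sigma> \<Longrightarrow> j \<in> M \<Longrightarrow> alive M \<pi> f g \<sigma> \<theta> t j \<le> alive M \<pi> f g (\<lambda>_ _. 0) \<theta> t j"
proof (induction t arbitrary: j)
  case (Suc t)
  have "alive M \<pi> f g \<sigma> \<theta> t i * (1 - stopP f \<sigma> \<theta> i) \<le> alive M \<pi> f g (\<lambda>_ _. 0) \<theta> t i * (1 - stopP f (\<lambda>_ _. 0) \<theta> i)"
    if "i \<in> M" for i
    using Suc that by (intro mult_mono) (auto simp: stopP_def valid_strategy_def alive_nonneg)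
  then show ?case
    using Suc.prems by (simp add: sum_mono mult_right_mono Ptrans_nonneg)
qed simp

lemma endprob_absorbing_le_never_stop:
  assumes "valid_strategy M \<sigma>" "k \<in> M" "absorbing f k"
  shows "endprob M \<pi> f g \<sigma> \<theta> k \<le> endprob M \<pi> f g (\<lambda>_ _. 0) \<theta> k"
proof -
  have "valid_strategy M (\<lambda>_ _. 0)" by (simp add: valid_strategy_def)
  then show ?thesis
    unfolding endprob_def using summable_end_terms[OF assms(1,2)] summable_end_terms[OF _ assms(2)]
    by (intro suminf_le) (auto simp: assms(3) alive_le_never_stop[OF assms(1,2)])
qed

end

locale two_absorbing = protocol_game M \<pi> f g "indicator {k1}"
  for M :: "nat set" and \<pi> :: "theta \<Rightarrow> 's::finite \<Rightarrow> real" and f :: "nat \<Rightarrow> 's \<Rightarrow> nat \<Rightarrow> real"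
    and g :: "nat \<Rightarrow> real" and k1 :: nat +
  fixes k2 :: nat
  assumes k1: "k1 \<in> M" and k2: "k2 \<in> M" and k1_ne_k2: "k1 \<noteq> k2"
    and absorbing_k1: "absorbing f k1" and absorbing_k2: "absorbing f k2"
    and reaches_ends: "\<forall>i\<in>M. \<exists>k\<in>{k1, k2}. (i, k) \<in> (trans_graph M f)\<^sup>*"
begin

lemma absorbing_iff: "i \<in> M \<Longrightarrow> absorbing f i \<longleftrightarrow> i \<in> {k1, k2}"
  using reaches_ends absorbing_rtrancl_eq absorbing_k1 absorbing_k2 by blast

lemma parsimonious: "parsimonious M \<pi> f (indicator {k1})"
proof -
  have "transient M \<pi> f \<theta> i" if "i \<in> M - {k2, k1}" for \<theta> i
    using that reaches_ends absorbing_k1 absorbing_k2 k1 k2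
    by (blast intro: transient_if_reaches_absorbing)
  then show ?thesis
    unfolding parsimonious_def using absorbing_iff k1 k2 k1_ne_k2
    by (intro bexI[of _ k2] bexI[of _ k1]) auto
qed

lemma US_two_absorbing:
  "US p M \<pi> f g (indicator {k1}) \<sigma> = p * endprob M \<pi> f g \<sigma> H k1 + (1 - p) * endprob M \<pi> f g \<sigma> L k1"
  using finite_M k1 by (simp add: US_def)

lemma UR_two_absorbing:
  assumes "valid_strategy M \<sigma>"
  shows "UR p M \<pi> f g (indicator {k1}) \<sigma> = p * endprob M \<pi> f g \<sigma> H k1 + (1 - p) * (1 - endprob M \<pi> f g \<sigma> L k1)"
proof -
  have "\<forall>i\<in>M. \<exists>j. (i, j) \<in> (trans_graph M f)\<^sup>* \<and> 0 < stopP f \<sigma> L j"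
    using reaches_ends absorbing_k1 absorbing_k2 by fastforce
  then have "(\<Sum>i\<in>M. endprob M \<pi> f g \<sigma> L i) = 1"
    using assms by (intro endprob_total_eq_1 alive_mass_tendsto_0)
  then show ?thesis
    using finite_M k1 by (simp add: UR_def algebra_simps sum_subtractf)
qed

lemma never_stop_best_response:
  assumes "0 \<le> p" "p \<le> 1"
  shows "(\<lambda>_ _. 0) \<in> br p M \<pi> f g (indicator {k1})"
  using assms endprob_absorbing_le_never_stop[OF _ k1 absorbing_k1]
  by (auto simp: br_def valid_strategy_def US_two_absorbing intro!: add_mono mult_left_mono)

lemma parsimonious_guarantee_two_absorbing:
  assumes "0 < p" "p < 1"
  shows "parsimonious_guarantee p \<pi> M f g (indicator {k1})
    (p * endprob M \<pi> f g (\<lambda>_ _. 0) H k1 + (1 - p) * (1 - endprob M \<pi> f g (\<lambda>_ _. 0) L k1))"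
  unfolding parsimonious_guarantee_def
proof (intro conjI ballI)
  show "br p M \<pi> f g (indicator {k1}) \<noteq> {}"
    using never_stop_best_response[of p] assms by auto
next
  fix \<sigma> assume br: "\<sigma> \<in> br p M \<pi> f g (indicator {k1})"
  then have \<sigma>: "valid_strategy M \<sigma>" by (simp add: br_def)
  let ?e = "\<lambda>\<sigma> \<theta>. endprob M \<pi> f g \<sigma> \<theta> k1"
  have le: "?e \<sigma> \<theta> \<le> ?e (\<lambda>_ _. 0) \<theta>" for \<theta> by (rule endprob_absorbing_le_never_stop[OF \<sigma> k1 absorbing_k1])
  have "US p M \<pi> f g (indicator {k1}) (\<lambda>_ _. 0) \<le> US p M \<pi> f g (indicator {k1}) \<sigma>"
    using br by (simp add: br_def valid_strategy_def)
  then have "p * (?e (\<lambda>_ _. 0) H - ?e \<sigma> H) \<le> (1 - p) * (?e \<sigma> L - ?e (\<lambda>_ _. 0) L)"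
    by (simp add: US_two_absorbing algebra_simps)
  also have "\<dots> \<le> 0" using le[of L] assms by (simp add: mult_nonneg_nonpos)
  finally have "?e \<sigma> H = ?e (\<lambda>_ _. 0) H"
    using le[of H] assms by (simp add: mult_le_0_iff)
  then show "p * ?e (\<lambda>_ _. 0) H + (1 - p) * (1 - ?e (\<lambda>_ _. 0) L) \<le> UR p M \<pi> f g (indicator {k1}) \<sigma>"
    using le[of L] assms by (simp add: UR_two_absorbing[OF \<sigma>] mult_left_mono)
qed (use protocol parsimonious in auto)

end

lemma two_state_guarantee:
  fixes \<pi> :: "theta \<Rightarrow> 's::finite \<Rightarrow> real"
  assumes signals: "valid_signals \<pi>" and p: "0 < p" "p < 1" and q: "0 \<le> q" "q \<le> 1"
  shows "\<exists>f g. parsimonious_guarantee p \<pi> {..<2} f g (indicator {1}) (p * q + (1 - p) * (1 - q))"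
proof -
  define f :: "nat \<Rightarrow> 's \<Rightarrow> nat \<Rightarrow> real" where "f i s j = (if j = i then 1 else 0)" for i s j
  define g :: "nat \<Rightarrow> real" where "g j = (if j = 1 then q else 1 - q)" for j
  have absorbing: "\<forall>i\<in>{..<2}. absorbing f i" by (simp add: absorbing_def f_def)
  interpret two_absorbing "{..<2}" \<pi> f g 1 0
    using signals q absorbing
    by unfold_locales (auto simp: is_protocol_def is_dist_def f_def g_def numeral_2_eq_2 lessThan_Suc)
  have "endprob {..<2} \<pi> f g (\<lambda>_ _. 0) \<theta> 1 = q" for \<theta>
    using endprob_all_absorbing[OF absorbing] by (simp add: g_def)
  then show ?thesis using parsimonious_guarantee_two_absorbing[OF p] by auto
qed

context protocol_game
begin

lemma guarantee_if_two_local_max: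
  assumes br: "\<sigma> \<in> br p M \<pi> f g a" and p: "0 < p" "p < 1"
    and k: "k1 \<in> local_max_states M f a" "k2 \<in> local_max_states M f a" "k1 \<noteq> k2"
  shows "\<exists>f' g'. parsimonious_guarantee p \<pi> M f' g' (indicator {k1}) (UR p M \<pi> f g a \<sigma>)"
proof -
  \<comment> \<open>The collapsed protocol can only imitate a strategy that ignores the state, so rho copies the H type.\<close>
  define \<rho> where "\<rho> = stop_at (local_max_states M f a) (\<lambda>i _. \<sigma> i H)"
  define e where "e i = stopP f \<rho> H i" for i
  have \<rho>: "valid_strategy M \<rho>" using br by (auto simp: \<rho>_def br_def valid_strategy_def stop_at_def)
  have e_stopP: "e i = stopP f \<rho> \<theta> i" for i \<theta> by (simp add: e_def stopP_def \<rho>_def stop_at_def)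
  have e_local_max: "e i = 1" if "i \<in> local_max_states M f a" for i
    using that by (simp add: e_def \<rho>_def stopP_stop_at)
  have "0 \<le> e i \<and> e i \<le> 1" if "i \<in> M" for i
    using stopP_bounds[OF \<rho> that, of f H] by (simp add: e_def)
  then interpret collapse_setting M \<pi> f g a e k1 k2
    using k e_local_max by unfold_locales (auto simp: local_max_states_def)
  have reach: "\<forall>i\<in>M. \<exists>j. (i, j) \<in> (trans_graph M f)\<^sup>* \<and> 0 < e j"
    using reaches_local_max e_local_max by fastforce
  interpret two: two_absorbing M \<pi> f' g' k1 k2
    using k1 k2 k1_ne_k2 absorbing_collapse collapse_reaches_ends_all[OF reach] by unfold_locales auto
  have "endprob M \<pi> f' g' (\<lambda>_ _. 0) \<theta> k1 = prob_H M \<pi> f g \<rho> \<theta> a" for \<theta>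
    using reach \<rho> e_stopP by (rule endprob_collapse_k1)
  then show ?thesis
    using two.parsimonious_guarantee_two_absorbing[OF p] UR_le_stop_at_local_maxima[OF br p \<rho>_def]
    by (auto intro: parsimonious_guarantee_mono)
qed

lemma UR_le_unique_local_max:
  assumes br: "\<sigma> \<in> br p M \<pi> f g a" and p: "0 < p" "p < 1"
    and unique: "local_max_states M f a = {i1}"
  shows "UR p M \<pi> f g a \<sigma> \<le> p * a i1 + (1 - p) * (1 - a i1)"
proof -
  have \<sigma>: "valid_strategy M \<sigma>" using br by (simp add: br_def)
  have i1: "i1 \<in> M" using unique by (auto simp: local_max_states_def)
  have "Max (a ` M) \<in> a ` M" using finite_M M_nonempty by simp
  then obtain j where j: "j \<in> M" "a j = Max (a ` M)" by auto
  then have a_max_j: "a k \<le> a j" if "k \<in> M" for k using finite_M that by simp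
  then have "j \<in> local_max_states M f a"
    unfolding local_max_states_def using j(1) rtrancl_trans_graph_in[of j _ M f] by blast
  then have a_max: "\<forall>k\<in>M. a k \<le> a i1" using a_max_j unique by auto
  define \<rho> where "\<rho> = stop_at {i1} (\<lambda>_ _. 0)"
  have "valid_strategy M \<rho>" by (simp add: \<rho>_def valid_strategy_def stop_at_def)
  moreover have "\<forall>i\<in>M. stopP f \<rho> L i = indicator {i1} i"
    using absorbing_local_max unique by (auto simp: \<rho>_def stopP_def stop_at_def)
  moreover have "\<forall>i\<in>M. (i, i1) \<in> (trans_graph M f)\<^sup>*"
    using reaches_local_max unique by fastforce
  ultimately have "prob_H M \<pi> f g \<rho> L a = a i1"
    using i1 by (rule prob_H_stop_only_at)
  then have "a i1 \<le> prob_H M \<pi> f g \<sigma> L a"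
    using best_response_prob_H_L_le[OF br \<open>valid_strategy M \<rho>\<close> p(2)] by simp
  moreover have "prob_H M \<pi> f g \<sigma> H a \<le> a i1"
    using \<sigma> a_max a_bounds i1 by (intro prob_H_le_bound) auto
  ultimately show ?thesis
    using p by (intro UR_le_prob_H_bounds[OF \<sigma>]) auto
qed

end

theorem theorem1:
  fixes p :: real and \<pi> :: "theta \<Rightarrow> 's::finite \<Rightarrow> real" and m :: nat
    and f :: "nat \<Rightarrow> 's \<Rightarrow> nat \<Rightarrow> real" and g a :: "nat \<Rightarrow> real"
    and \<sigma> :: "nat \<Rightarrow> theta \<Rightarrow> real"
  assumes "0 < p" and "p < 1"
    and "valid_signals \<pi>"
    and "2 \<le> m"
    and "is_protocol {..<m} f g a"
    and "\<not> parsimonious {..<m} \<pi> f a"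
    and "\<sigma> \<in> br p {..<m} \<pi> f g a"
  shows "\<exists>m' f' g' a'. m' \<le> m \<and> is_protocol {..<m'} f' g' a' \<and> parsimonious {..<m'} \<pi> f' a'
           \<and> br p {..<m'} \<pi> f' g' a' \<noteq> {}
           \<and> (\<forall>\<sigma>'\<in>br p {..<m'} \<pi> f' g' a'. UR p {..<m} \<pi> f g a \<sigma> \<le> UR p {..<m'} \<pi> f' g' a' \<sigma>')"
proof -
  interpret protocol_game "{..<m}" \<pi> f g a
    using assms by unfold_locales
  let ?LM = "local_max_states {..<m} f a" and ?u = "UR p {..<m} \<pi> f g a \<sigma>"
  obtain i where i: "i \<in> ?LM"
    using reaches_local_max[of 0] assms(4) by auto
  have "\<exists>m' f' g' a'. m' \<le> m \<and> parsimonious_guarantee p \<pi> {..<m'} f' g' a' ?u"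
  proof (cases "?LM = {i}")
    case False
    then obtain k where "k \<in> ?LM" "i \<noteq> k" using i by blast
    then show ?thesis using guarantee_if_two_local_max[OF assms(7,1,2) i] by blast
  next
    case True
    have "0 \<le> a i" "a i \<le> 1" using i a_bounds by (auto simp: local_max_states_def)
    then obtain f' g' where
      "parsimonious_guarantee p \<pi> {..<2} f' g' (indicator {1}) (p * a i + (1 - p) * (1 - a i))"
      using two_state_guarantee assms(1-3) by blast
    moreover have "?u \<le> p * a i + (1 - p) * (1 - a i)"
      using UR_le_unique_local_max[OF assms(7,1,2) True] .
    ultimately show ?thesis using assms(4) parsimonious_guarantee_mono by blast
  qed
  then show ?thesis by (auto simp: parsimonious_guarantee_def)
qed

end
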